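(* Let $X_t$ be a real random variable with finite second moment and a differentiable density $f_X$, and suppose the limits $\lim_{x\to+\infty} f_X(x)$ and $\lim_{x\to-\infty} f_X(x)$ exist. Define $$\omega_X(x) := \frac{\operatorname{Cov}[\mathbb{1}[X_t \ge x],\, X_t]}{\operatorname{Var}[X_t]}, \qquad x\in\mathbb{R}.$$ Then the following two statements are equivalent: (i) $X_t$ follows a Normal distribution; (ii) $\omega_X(x) = f_X(x)$ for all $x \in \mathbb{R}$.
   Context: $\mathbb{1}[\cdot]$ denotes the indicator function. *)

theory Defs
  imports "HOL-Probability.Probability"
begin

definition covariance :: "'a measure \<Rightarrow> ('a \<Rightarrow> real) \<Rightarrow> ('a \<Rightarrow> real) \<Rightarrow> real" where
  "covariance M X Y =
     (\<integral>w. (X w - (\<integral>v. X v \<partial>M)) * (Y w - (\<integral>v. Y v \<partial>M)) \<partial>M)"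

definition var :: "'a measure \<Rightarrow> ('a \<Rightarrow> real) \<Rightarrow> real" where
  "var M X = (\<integral>w. (X w - (\<integral>v. X v \<partial>M))\<^sup>2 \<partial>M)"

definition omega :: "'a measure \<Rightarrow> ('a \<Rightarrow> real) \<Rightarrow> real \<Rightarrow> real" where
  "omega M X x = covariance M (\<lambda>w. indicator {x..} (X w)) X / var M X"

end

theory Submission
  imports Defs "HOL-Real_Asymp.Real_Asymp"
begin

text \<open>
  For a density \<open>f\<close> of \<open>X\<close> with mean \<open>m\<close>, the covariance \<open>Cov[1[X \<ge> x], X]\<close> is the tail
  integral \<open>G x = \<integral>\<^sub>x\<^sup>\<infinity> f t (t - m) dt\<close>, so \<open>G' x = - (x - m) f x\<close>.
  If \<open>\<omega>\<^sub>X = f\<close>, then \<open>f = G / Var X\<close> solves \<open>f' x = - (x - m) f x / Var X\<close>, so \<open>f\<close> is a multiple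
  of the normal density with mean \<open>m\<close> and variance \<open>Var X\<close>, and the multiple is \<open>1\<close>.
  Conversely, for the normal density \<open>\<phi>\<close> Stein's identity \<open>\<integral>\<^sub>x\<^sup>\<infinity> \<phi> t (t - \<mu>) dt = \<sigma>\<^sup>2 \<phi> x\<close>
  gives \<open>\<omega>\<^sub>X = \<phi>\<close>, and \<open>\<phi> = f\<close> because continuous densities of the same distribution coincide.
\<close>

lemma set_integrable_lborel_of_integrable:
  fixes g :: "real \<Rightarrow> real"
  assumes "integrable lborel g" and "S \<in> sets borel"
  shows "set_integrable lborel S g"
  using assms unfolding set_integrable_def by (intro integrable_mult_indicator) auto

lemma set_integral_atLeast_split:
  fixes g :: "real \<Rightarrow> real"
  assumes "integrable lborel g" and "a \<le> b"
  shows "(LINT t:{a..}|lborel. g t) = (LINT t:{a..b}|lborel. g t) + (LINT t:{b..}|lborel. g t)"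
proof -
  have "(LINT t:{a..b} \<union> {b..}|lborel. g t) = (LINT t:{a..b}|lborel. g t) + (LINT t:{b..}|lborel. g t)"
  proof (rule set_integral_Un_AE)
    show "AE t in lborel. \<not> (t \<in> {a..b} \<and> t \<in> {b..})"
      using AE_lborel_singleton[of b] by eventually_elim auto
  qed (use assms(1) in \<open>auto intro: set_integrable_lborel_of_integrable\<close>)
  moreover have "{a..b} \<union> {b..} = {a..}" using assms(2) by auto
  ultimately show ?thesis by simp
qed

lemma has_real_derivative_tail_integral:
  fixes g :: "real \<Rightarrow> real"
  assumes "continuous_on UNIV g" and "integrable lborel g"
  shows "((\<lambda>y. LINT t:{y..}|lborel. g t) has_real_derivative - g x) (at x)"
proof -
  define b where "b = x + 1"
  have "((\<lambda>y. integral {y..b} g) has_real_derivative - g x) (at x within {x - 1..b})"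
    by (rule integral_has_real_derivative')
       (auto intro: continuous_on_subset[OF assms(1)] simp: b_def)
  moreover have "at x within {x - 1..b} = at x"
    by (rule at_within_interior) (auto simp: b_def)
  ultimately have "((\<lambda>y. integral {y..b} g + (LINT t:{b..}|lborel. g t)) has_real_derivative - g x + 0) (at x)"
    by (intro DERIV_add DERIV_const) simp
  then have "((\<lambda>y. integral {y..b} g + (LINT t:{b..}|lborel. g t)) has_real_derivative - g x) (at x)"
    by simp
  then show ?thesis
  proof (rule has_field_derivative_transform_within_open[where S = "{..<b}"], simp_all)
    fix y :: real assume "y < b"
    then show "integral {y..b} g + (LINT t:{b..}|lborel. g t) = (LINT t:{y..}|lborel. g t)"
      using set_integral_atLeast_split[OF assms(2), of y b]
        set_borel_integral_eq_integral(2)[OF set_integrable_lborel_of_integrable[OF assms(2), of "{y..b}"]]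
      by simp
  qed (simp add: b_def)
qed

lemma tendsto_tail_integral_at_top:
  fixes g :: "real \<Rightarrow> real"
  assumes "integrable lborel g"
  shows "((\<lambda>y. LINT t:{y..}|lborel. g t) \<longlongrightarrow> 0) at_top"
proof -
  let ?I = "LINT t:{0..}|lborel. g t"
  have "((\<lambda>y. LINT t:{0..y}|lborel. g t) \<longlongrightarrow> ?I) at_top"
    using assms by (intro tendsto_set_lebesgue_integral_at_top set_integrable_lborel_of_integrable) auto
  then have "((\<lambda>y. ?I - (LINT t:{0..y}|lborel. g t)) \<longlongrightarrow> ?I - ?I) at_top"
    by (intro tendsto_diff tendsto_const)
  then have "((\<lambda>y. ?I - (LINT t:{0..y}|lborel. g t)) \<longlongrightarrow> 0) at_top"
    by simp
  moreover have "\<forall>\<^sub>F y in at_top. ?I - (LINT t:{0..y}|lborel. g t) = (LINT t:{y..}|lborel. g t)"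
    using eventually_ge_at_top[of 0]
    by eventually_elim (simp add: set_integral_atLeast_split[OF assms])
  ultimately show ?thesis
    by (rule Lim_transform_eventually)
qed

lemma tail_integral_eq_of_has_real_derivative:
  fixes g F :: "real \<Rightarrow> real"
  assumes "continuous_on UNIV g" and "integrable lborel g"
    and F': "\<And>y. (F has_real_derivative - g y) (at y)" and F_lim: "(F \<longlongrightarrow> 0) at_top"
  shows "(LINT t:{x..}|lborel. g t) = F x"
proof -
  define H where "H y = (LINT t:{y..}|lborel. g t) - F y" for y
  have "(H has_real_derivative - g y - - g y) (at y)" for y
    unfolding H_def by (intro DERIV_diff has_real_derivative_tail_integral assms(1,2) F')
  then have "(H has_real_derivative 0) (at y)" for y
    by simp
  then have H_const: "H y = H x" for y
    using DERIV_isconst_all by blast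
  have "(H \<longlongrightarrow> 0 - 0) at_top"
    unfolding H_def by (intro tendsto_diff tendsto_tail_integral_at_top assms(2) F_lim)
  then have "(H \<longlongrightarrow> 0) at_top"
    by simp
  then have "((\<lambda>_ :: real. H x) \<longlongrightarrow> 0) at_top"
    by (rule Lim_transform_eventually) (intro always_eventually allI H_const)
  then show ?thesis
    by (simp add: H_def tendsto_const_iff)
qed

lemma normal_density_has_real_derivative:
  assumes "\<sigma> > 0"
  shows "(normal_density \<mu> \<sigma> has_real_derivative - (x - \<mu>) / \<sigma>\<^sup>2 * normal_density \<mu> \<sigma> x) (at x)"
proof -
  have "((\<lambda>x. - (x - \<mu>)\<^sup>2) has_real_derivative - (2 * (x - \<mu>))) (at x)"
    by (auto intro!: derivative_eq_intros)
  then have "((\<lambda>x. 1 / sqrt (2 * pi * \<sigma>\<^sup>2) * exp (- (x - \<mu>)\<^sup>2 / (2 * \<sigma>\<^sup>2))) has_real_derivative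
      1 / sqrt (2 * pi * \<sigma>\<^sup>2) * (exp (- (x - \<mu>)\<^sup>2 / (2 * \<sigma>\<^sup>2)) * (- (2 * (x - \<mu>)) / (2 * \<sigma>\<^sup>2)))) (at x)"
    by (intro DERIV_cmult DERIV_fun_exp DERIV_cdivide)
  then show ?thesis
    unfolding normal_density_def by (rule DERIV_cong) (use assms in \<open>simp add: field_simps\<close>)
qed

lemma scaled_normal_density_has_real_derivative:
  assumes "\<sigma> > 0"
  shows "((\<lambda>x. \<sigma>\<^sup>2 * normal_density \<mu> \<sigma> x) has_real_derivative
    - (normal_density \<mu> \<sigma> x * (x - \<mu>))) (at x)"
proof -
  have "((\<lambda>x. \<sigma>\<^sup>2 * normal_density \<mu> \<sigma> x) has_real_derivative
      \<sigma>\<^sup>2 * (- (x - \<mu>) / \<sigma>\<^sup>2 * normal_density \<mu> \<sigma> x)) (at x)"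
    by (intro DERIV_cmult normal_density_has_real_derivative assms)
  moreover have "\<sigma>\<^sup>2 * (- (x - \<mu>) / \<sigma>\<^sup>2 * normal_density \<mu> \<sigma> x) = - (normal_density \<mu> \<sigma> x * (x - \<mu>))"
    using assms by (simp add: field_simps)
  ultimately show ?thesis
    by (rule DERIV_cong)
qed

lemma continuous_on_normal_density:
  assumes "\<sigma> > 0"
  shows "continuous_on UNIV (normal_density \<mu> \<sigma>)"
  using normal_density_has_real_derivative[OF assms]
  by (meson DERIV_continuous continuous_at_imp_continuous_on)

lemma tendsto_normal_density_at_top:
  assumes "\<sigma> > 0"
  shows "(normal_density \<mu> \<sigma> \<longlongrightarrow> 0) at_top"
  unfolding normal_density_def using assms by real_asymp

lemma tail_integral_normal_density_centered:
  assumes \<sigma>: "\<sigma> > 0"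
  shows "(LINT t:{x..}|lborel. normal_density \<mu> \<sigma> t * (t - \<mu>)) = \<sigma>\<^sup>2 * normal_density \<mu> \<sigma> x"
proof (rule tail_integral_eq_of_has_real_derivative[where F = "\<lambda>x. \<sigma>\<^sup>2 * normal_density \<mu> \<sigma> x"])
  show "continuous_on UNIV (\<lambda>t. normal_density \<mu> \<sigma> t * (t - \<mu>))"
    by (intro continuous_intros continuous_on_normal_density \<sigma>)
  show "integrable lborel (\<lambda>t. normal_density \<mu> \<sigma> t * (t - \<mu>))"
    using integrable_normal_moment[OF \<sigma>, of \<mu> 1] by simp
  show "((\<lambda>x. \<sigma>\<^sup>2 * normal_density \<mu> \<sigma> x) has_real_derivative
      - (normal_density \<mu> \<sigma> y * (y - \<mu>))) (at y)" for y
    by (rule scaled_normal_density_has_real_derivative[OF \<sigma>])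
  have "((\<lambda>x. \<sigma>\<^sup>2 * normal_density \<mu> \<sigma> x) \<longlongrightarrow> \<sigma>\<^sup>2 * 0) at_top"
    by (intro tendsto_mult tendsto_const tendsto_normal_density_at_top \<sigma>)
  then show "((\<lambda>x. \<sigma>\<^sup>2 * normal_density \<mu> \<sigma> x) \<longlongrightarrow> 0) at_top"
    by simp
qed

lemma scaled_normal_density_if_has_real_derivative:
  fixes f :: "real \<Rightarrow> real"
  assumes \<sigma>: "\<sigma> > 0" and f': "\<And>x. (f has_real_derivative - (x - \<mu>) / \<sigma>\<^sup>2 * f x) (at x)"
  shows "\<exists>c. f = (\<lambda>x. c * normal_density \<mu> \<sigma> x)"
proof -
  let ?\<phi> = "normal_density \<mu> \<sigma>"
  have "((\<lambda>x. f x / ?\<phi> x) has_real_derivative 0) (at x)" for x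
  proof -
    have "((\<lambda>x. f x / ?\<phi> x) has_real_derivative
        (- (x - \<mu>) / \<sigma>\<^sup>2 * f x * ?\<phi> x - f x * (- (x - \<mu>) / \<sigma>\<^sup>2 * ?\<phi> x)) / (?\<phi> x * ?\<phi> x)) (at x)"
      using normal_density_pos[OF \<sigma>, of \<mu> x]
      by (intro DERIV_divide f' normal_density_has_real_derivative \<sigma>) simp
    then show ?thesis
      by (simp add: algebra_simps)
  qed
  then have ratio_const: "f x / ?\<phi> x = f \<mu> / ?\<phi> \<mu>" for x
    using DERIV_isconst_all by blast
  have "f x = f \<mu> / ?\<phi> \<mu> * ?\<phi> x" for x
    using ratio_const[of x] normal_density_pos[OF \<sigma>, of \<mu> x] by (simp add: divide_eq_eq)
  then show ?thesis
    by blast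
qed

lemma (in prob_space) integral_density_eq_1:
  assumes "distributed M lborel X (\<lambda>x. ennreal (h x))" and "\<And>x. h x \<ge> 0"
  shows "(\<integral>x. h x \<partial>lborel) = 1"
  using distributed_integral[OF assms(1), of "\<lambda>_. 1"] assms(2) by (simp add: prob_space)

lemma (in prob_space) integrable_density_mult_centered:
  assumes "distributed M lborel X (\<lambda>x. ennreal (h x))" and "\<And>x. h x \<ge> 0"
    and "integrable M X"
  shows "integrable lborel (\<lambda>t. h t * (t - c))"
  using distributed_integrable[OF assms(1), of "\<lambda>t. t - c"] assms(2,3) by simp

lemma (in prob_space) covariance_indicator_atLeast:
  assumes D: "distributed M lborel X (\<lambda>x. ennreal (h x))" and h_nonneg: "\<And>x. h x \<ge> 0"
    and X: "integrable M X"
  shows "covariance M (\<lambda>w. indicator {x..} (X w)) X = (LINT t:{x..}|lborel. h t * (t - expectation X))"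
proof -
  let ?m = "expectation X" and ?p = "expectation (\<lambda>w. indicator {x..} (X w) :: real)"
  have [measurable]: "X \<in> borel_measurable M"
    using X by simp
  have X_centered: "integrable M (\<lambda>w. X w - ?m)"
    using X by simp
  have tail_centered: "integrable M (\<lambda>w. indicator {x..} (X w) * (X w - ?m) :: real)"
    by (rule Bochner_Integration.integrable_bound[OF X_centered]) (auto split: split_indicator)
  have "covariance M (\<lambda>w. indicator {x..} (X w)) X
      = expectation (\<lambda>w. indicator {x..} (X w) * (X w - ?m) - ?p * (X w - ?m))"
    unfolding covariance_def by (intro Bochner_Integration.integral_cong) (auto simp: algebra_simps)
  also have "\<dots> = expectation (\<lambda>w. indicator {x..} (X w) * (X w - ?m)) - ?p * expectation (\<lambda>w. X w - ?m)"
    using tail_centered X_centered by simp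
  also have "expectation (\<lambda>w. X w - ?m) = 0"
    using X by (simp add: prob_space)
  also have "expectation (\<lambda>w. indicator {x..} (X w) * (X w - ?m)) = (\<integral>t. h t * (indicator {x..} t * (t - ?m)) \<partial>lborel)"
    by (rule distributed_integral[OF D, symmetric]) (auto simp: h_nonneg)
  also have "\<dots> = (LINT t:{x..}|lborel. h t * (t - ?m))"
    unfolding set_lebesgue_integral_def by (intro Bochner_Integration.integral_cong) auto
  finally show ?thesis
    by simp
qed

lemma (in prob_space) continuous_density_unique:
  fixes X :: "'a \<Rightarrow> real" and f g :: "real \<Rightarrow> real"
  assumes Df: "distributed M lborel X (\<lambda>x. ennreal (f x))" and "\<And>x. f x \<ge> 0"
    and "continuous_on UNIV f"
    and Dg: "distributed M lborel X (\<lambda>x. ennreal (g x))" and "\<And>x. g x \<ge> 0"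
    and "continuous_on UNIV g"
  shows "f = g"
proof
  fix x
  have tail_eq: "(LINT t:{y..}|lborel. h t) = expectation (\<lambda>w. indicator {y..} (X w))"
    if "distributed M lborel X (\<lambda>x. ennreal (h x))" and "\<And>x. h x \<ge> 0" for h y
    using distributed_integral[OF that(1), of "indicator {y..}"] that(2)
    by (simp add: set_lebesgue_integral_def mult.commute)
  have integrable: "integrable lborel h"
    if "distributed M lborel X (\<lambda>x. ennreal (h x))" and "\<And>x. h x \<ge> 0" for h
    using distributed_integrable[OF that(1), of "\<lambda>_. 1"] that(2) by simp
  have "((\<lambda>y. LINT t:{y..}|lborel. f t) has_real_derivative - f x) (at x)"
    using assms by (intro has_real_derivative_tail_integral integrable)
  moreover have "((\<lambda>y. LINT t:{y..}|lborel. f t) has_real_derivative - g x) (at x)"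
    using has_real_derivative_tail_integral[OF assms(6) integrable[OF Dg assms(5)]]
    by (simp add: tail_eq[OF Df assms(2)] tail_eq[OF Dg assms(5)])
  ultimately show "f x = g x"
    using DERIV_unique by fastforce
qed

lemma (in prob_space) omega_normal_density:
  assumes \<sigma>: "\<sigma> > 0" and D: "distributed M lborel X (\<lambda>x. ennreal (normal_density \<mu> \<sigma> x))"
  shows "omega M X x = normal_density \<mu> \<sigma> x"
proof -
  have D': "distributed M lborel X (normal_density \<mu> \<sigma>)"
    using D by simp
  have X: "integrable M X"
    using distributed_integrable[OF D', of "\<lambda>x. x"] integrable_normal_moment_nz_1[OF \<sigma>] by simp
  have "omega M X x = (LINT t:{x..}|lborel. normal_density \<mu> \<sigma> t * (t - \<mu>)) / \<sigma>\<^sup>2"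
    using normal_distributed_expectation[OF \<sigma> D'] normal_distributed_variance[OF \<sigma> D']
    by (simp add: omega_def covariance_indicator_atLeast[OF D normal_density_nonneg X] var_def)
  also have "\<dots> = normal_density \<mu> \<sigma> x"
    using \<sigma> by (simp add: tail_integral_normal_density_centered[OF \<sigma>])
  finally show ?thesis .
qed

lemma (in prob_space) normal_distributed_if_omega_eq_density:
  assumes D: "distributed M lborel X (\<lambda>x. ennreal (f x))" and f_nonneg: "\<And>x. f x \<ge> 0"
    and f_cont: "continuous_on UNIV f" and X: "integrable M X"
    and omega_eq: "\<And>x. omega M X x = f x"
  shows "\<exists>\<mu> \<sigma>. \<sigma> > 0 \<and> distributed M lborel X (\<lambda>x. ennreal (normal_density \<mu> \<sigma> x))"
proof -
  define m where "m = expectation X"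
  define G where "G x = (LINT t:{x..}|lborel. f t * (t - m))" for x
  have f_eq: "f x = G x / var M X" for x
    using omega_eq[of x] by (simp add: omega_def covariance_indicator_atLeast[OF D f_nonneg X] G_def m_def)
  have var_pos: "var M X > 0"
  proof (rule ccontr)
    assume "\<not> var M X > 0"
    moreover have "var M X \<ge> 0"
      by (simp add: var_def)
    ultimately have "var M X = 0"
      by simp
    then show False
      using distributed_imp_emeasure_nonzero[OF D] by (simp add: f_eq)
  qed
  define \<sigma> where "\<sigma> = sqrt (var M X)"
  have \<sigma>: "\<sigma> > 0" and \<sigma>_sq: "\<sigma>\<^sup>2 = var M X"
    using var_pos by (simp_all add: \<sigma>_def)
  have "(f has_real_derivative - (f x * (x - m)) / var M X) (at x)" for x
  proof -
    have "(G has_real_derivative - (f x * (x - m))) (at x)"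
      unfolding G_def
      by (intro has_real_derivative_tail_integral continuous_intros f_cont
          integrable_density_mult_centered[OF D f_nonneg X])
    then have "((\<lambda>x. G x / var M X) has_real_derivative - (f x * (x - m)) / var M X) (at x)"
      by (rule DERIV_cdivide)
    then show ?thesis
      by (simp add: f_eq[symmetric])
  qed
  then have "(f has_real_derivative - (x - m) / \<sigma>\<^sup>2 * f x) (at x)" for x
    by (rule DERIV_cong) (use var_pos in \<open>simp add: \<sigma>_sq field_simps\<close>)
  then obtain c where f_scaled: "f = (\<lambda>x. c * normal_density m \<sigma> x)"
    using scaled_normal_density_if_has_real_derivative[OF \<sigma>] by blast
  then have "c = 1"
    using integral_density_eq_1[OF D f_nonneg] integral_normal_density[OF \<sigma>] by simp
  then show ?thesis
    using D \<sigma> f_scaled by auto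
qed

theorem lemma2:
  fixes M :: "'a measure" and X :: "'a \<Rightarrow> real" and f :: "real \<Rightarrow> real"
  assumes "prob_space M"
    and "X \<in> borel_measurable M"
    and "integrable M (\<lambda>w. (X w)\<^sup>2)"
    and "\<And>x. f x \<ge> 0"
    and "distributed M lborel X (\<lambda>x. ennreal (f x))"
    and "\<And>x. f differentiable (at x)"
    and "\<exists>L. (f \<longlongrightarrow> L) at_top"
    and "\<exists>L. (f \<longlongrightarrow> L) at_bot"
  shows "(\<exists>\<mu> \<sigma>. \<sigma> > 0 \<and> distributed M lborel X (\<lambda>x. ennreal (normal_density \<mu> \<sigma> x)))
         \<longleftrightarrow> (\<forall>x. omega M X x = f x)"
proof -
  interpret prob_space M by fact
  have f_cont: "continuous_on UNIV f"
    using assms(6) by (meson continuous_at_imp_continuous_on differentiable_imp_continuous_within)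
  show ?thesis
  proof
    assume "\<exists>\<mu> \<sigma>. \<sigma> > 0 \<and> distributed M lborel X (\<lambda>x. ennreal (normal_density \<mu> \<sigma> x))"
    then obtain \<mu> \<sigma> where \<sigma>: "\<sigma> > 0"
      and D_normal: "distributed M lborel X (\<lambda>x. ennreal (normal_density \<mu> \<sigma> x))"
      by blast
    have "f = normal_density \<mu> \<sigma>"
      using assms(4,5) f_cont D_normal continuous_on_normal_density[OF \<sigma>]
      by (intro continuous_density_unique) auto
    then show "\<forall>x. omega M X x = f x"
      using omega_normal_density[OF \<sigma> D_normal] by simp
  next
    assume "\<forall>x. omega M X x = f x"
    moreover have "integrable M X"
      using square_integrable_imp_integrable[OF assms(2,3)] .
    ultimately show "\<exists>\<mu> \<sigma>. \<sigma> > 0 \<and> distributed M lborel X (\<lambda>x. ennreal (normal_density \<mu> \<sigma> x))"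
      using assms(4,5) f_cont by (intro normal_distributed_if_omega_eq_density) auto
  qed
qed

end
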